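(* For every $n\ge1$, $\eta_{0,1,1}(N_{n,n})=1$. For $n\ge2$, \[ \eta_{0,1,1}(N_{n,k})=\begin{cases}\zeta(n)-\eta_{0,1,1}(N_{n-1,1}), & k=1,\\ \zeta(n)+\eta_{0,1,1}(N_{n-1,k-1})-\eta_{0,1,1}(N_{n-1,k}), & 1<k<n.\end{cases} \]
   Context: For a composition $I=(i_1,\dots,i_j)$ and $n\ge1$, $M_I(n)=\sum_{1\le n_1<\cdots<n_j\le n}n_1^{-i_1}\cdots n_j^{-i_j}$. Define $\eta_{0,1,1}(M_I)=\sum_{n=1}^\infty\frac{M_I(n)}{(n+1)(n+2)}$, extended linearly. For $n\ge m\ge1$, $N_{n,m}=\sum_I M_I$, the sum over all compositions $I$ of $n$ with exactly $m$ parts (the sum of monomial symmetric functions over partitions of $n$ with $m$ parts). $\zeta$ is the Riemann zeta function. *)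

theory Defs
  imports "HOL-Analysis.Analysis"
begin

definition compositions :: "nat \<Rightarrow> nat \<Rightarrow> nat list set" where
  "compositions n m = {I. sum_list I = n \<and> length I = m \<and> (\<forall>x\<in>set I. 0 < x)}"

text \<open>Multiple harmonic sum M_I(N): sum over 1 \<le> n_1 < ... < n_j \<le> N of
  prod n_k^(-i_k). Strictly increasing tuples are identified with subsets
  of {1..N} of cardinality j, listed in increasing order.\<close>
definition MHS :: "nat list \<Rightarrow> nat \<Rightarrow> real" where
  "MHS I N = (\<Sum>S\<in>{S. S \<subseteq> {1..N} \<and> card S = length I}.
      \<Prod>k<length I. 1 / real (sorted_list_of_set S ! k) ^ (I ! k))"

definition Nsym :: "nat \<Rightarrow> nat \<Rightarrow> nat \<Rightarrow> real" where
  "Nsym n m N = (\<Sum>I\<in>compositions n m. MHS I N)"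

text \<open>eta_{0,1,1}(f) = sum_{N\<ge>1} f(N) / ((N+1)(N+2)).\<close>
definition eta011 :: "(nat \<Rightarrow> real) \<Rightarrow> real" where
  "eta011 f = (\<Sum>k. f (k + 1) / (real (k + 2) * real (k + 3)))"

definition zeta_nat :: "nat \<Rightarrow> real" where
  "zeta_nat s = (\<Sum>k. 1 / real (k + 1) ^ s)"

end

theory Submission
  imports Defs "HOL-Real_Asymp.Real_Asymp"
begin

text \<open>For 0 <= x < 1 the generating function sum_h N_{k+h,k}(N) x^h is
  P_k(x, N) = sum of 1/((m_1 - x) ... (m_k - x)) over 1 <= m_1 < ... < m_k <= N.
  Let A_k(x) = sum_{N >= 0} P_k(x, N) / ((N+1)(N+2)), so that A_0 = 1. Summing the weights first,
  sum_{N >= m} 1/((N+1)(N+2)) = 1/(m+1), and splitting 1/((m-x)(m+1)) into partial fractions gives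
  (1 + x) A_{k+1} = A_k + x sum_N P_k(x, N) / ((N+1)(N+1-x)). The last sum equals
  sum_{p >= 1} 1/(p^{k+1} (p-x)) = sum_h zeta(k+2+h) x^h: write 1/(N+1) = sum_p E(N+1, p)/(p-x) with
  E(n, p) = (1-x)_p / (n+1-x)_p, which telescopes in p, and sum over N first, where E telescopes
  in n. Comparing coefficients of x^h in (1 + x) A_{k+1} = A_k + x sum_h zeta(k+2+h) x^h gives the
  theorem.\<close>

section \<open>Compositions and multiple harmonic sums\<close>

lemma length_le_sum_list: "\<forall>x\<in>set I. 0 < (x::nat) \<Longrightarrow> length I \<le> sum_list I"
  by (induction I) auto

lemma finite_compositions: "finite (compositions n m)"
proof -
  have "compositions n m \<subseteq> {xs. set xs \<subseteq> {0..n} \<and> length xs = m}"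
    unfolding compositions_def using member_le_sum_list by fastforce
  thus ?thesis by (rule finite_subset) (simp add: finite_lists_length_eq)
qed

lemma compositions_eq_empty: "n < m \<Longrightarrow> compositions n m = {}"
  unfolding compositions_def using length_le_sum_list by fastforce

lemma compositions_0_right: "compositions n 0 = (if n = 0 then {[]} else {})"
  unfolding compositions_def by auto

lemma compositions_Suc_right:
  "compositions n (Suc k) = (\<lambda>(i, I). I @ [i]) ` (SIGMA i:{1..n}. compositions (n - i) k)"
proof (intro equalityI subsetI)
  fix J assume J: "J \<in> compositions n (Suc k)"
  hence "J \<noteq> []" unfolding compositions_def by auto
  hence J_eq: "J = butlast J @ [last J]" and "last J \<in> set J" by simp_all
  with J have "(last J, butlast J) \<in> (SIGMA i:{1..n}. compositions (n - i) k)"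
    unfolding compositions_def
    by (subst (asm) (1 2) J_eq) (auto simp: Suc_le_eq dest: in_set_butlastD)
  thus "J \<in> (\<lambda>(i, I). I @ [i]) ` (SIGMA i:{1..n}. compositions (n - i) k)"
    by (rule image_eqI[rotated]) (simp flip: J_eq)
next
  fix J assume "J \<in> (\<lambda>(i, I). I @ [i]) ` (SIGMA i:{1..n}. compositions (n - i) k)"
  thus "J \<in> compositions n (Suc k)" unfolding compositions_def by auto
qed

lemma MHS_Nil: "MHS [] N = 1"
proof -
  have "{S. S \<subseteq> {1..N} \<and> card S = 0} = {{}}"
    using finite_subset[of _ "{1..N}"] by auto
  thus ?thesis unfolding MHS_def by simp
qed

lemma MHS_nonneg: "MHS I N \<ge> 0"
  unfolding MHS_def by (intro sum_nonneg prod_nonneg) auto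

lemma sorted_list_of_set_insert_greater:
  assumes "finite T" "\<forall>t\<in>T. t < (m::nat)"
  shows "sorted_list_of_set (insert m T) = sorted_list_of_set T @ [m]"
proof -
  have "m \<notin> T" using assms by auto
  hence "sorted_list_of_set (insert m T) = insort m (sorted_list_of_set T)"
    using assms by (simp add: sorted_list_of_set_insert)
  also have "\<dots> = sorted_list_of_set T @ [m]"
    using assms by (intro sorted_insort_is_snoc) (auto simp: less_imp_le)
  finally show ?thesis .
qed

lemma subsets_card_Suc_eq:
  fixes N l :: nat
  shows "{S. S \<subseteq> {1..N} \<and> card S = Suc l} =
     (\<lambda>(m, T). insert m T) ` (SIGMA m:{1..N}. {T. T \<subseteq> {1..m - 1} \<and> card T = l})"
proof (intro equalityI subsetI)
  fix S assume S: "S \<in> {S. S \<subseteq> {1..N} \<and> card S = Suc l}"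
  hence fin: "finite S" and "S \<noteq> {}" using finite_subset[of S "{1..N}"] by auto
  define m where "m = Max S"
  have "m \<in> S" "\<forall>t\<in>S. t \<le> m" using fin \<open>S \<noteq> {}\<close> by (simp_all add: m_def)
  hence "S - {m} \<subseteq> {1..m - 1}" "card (S - {m}) = l" "S = insert m (S - {m})"
    using S fin by fastforce+
  thus "S \<in> (\<lambda>(m, T). insert m T) ` (SIGMA m:{1..N}. {T. T \<subseteq> {1..m - 1} \<and> card T = l})"
    using S \<open>m \<in> S\<close> by (intro image_eqI[of _ _ "(m, S - {m})"]) auto
next
  fix S assume "S \<in> (\<lambda>(m, T). insert m T) ` (SIGMA m:{1..N}. {T. T \<subseteq> {1..m - 1} \<and> card T = l})"
  then obtain m T where S: "S = insert m T" "m \<in> {1..N}" "T \<subseteq> {1..m - 1}" "card T = l" by auto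
  moreover have "m \<notin> T" "finite T" using S finite_subset by auto
  moreover have "\<forall>t\<in>T. 1 \<le> t \<and> t \<le> m - 1" using S(3) by auto
  ultimately show "S \<in> {S. S \<subseteq> {1..N} \<and> card S = Suc l}" by auto
qed

lemma inj_on_insert_greater:
  fixes N l :: nat
  shows "inj_on (\<lambda>(m, T). insert m T) (SIGMA m:{1..N}. {T. T \<subseteq> {1..m - 1} \<and> card T = l})"
proof (rule inj_onI, clarify)
  fix m m' :: nat and T T' :: "nat set"
  assume T: "T \<subseteq> {1..m - 1}" "T' \<subseteq> {1..m' - 1}" and eq: "insert m T = insert m' T'"
    and "m \<in> {1..N}" "m' \<in> {1..N}"
  have "m = m' \<or> m \<in> {1..m' - 1}" "m' = m \<or> m' \<in> {1..m - 1}"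
    using eq T by blast+
  hence "m = m'" by auto
  moreover have "m \<notin> T" "m' \<notin> T'" using T \<open>m \<in> _\<close> \<open>m' \<in> _\<close> by auto
  ultimately show "m = m' \<and> T = T'" using eq by (metis Diff_insert_absorb)
qed

lemma MHS_snoc: "MHS (I @ [i]) N = (\<Sum>m=1..N. MHS I (m - 1) / real m ^ i)"
proof -
  define l where "l = length I"
  define F where "F S = (\<Prod>k<Suc l. 1 / real (sorted_list_of_set S ! k) ^ ((I @ [i]) ! k))" for S
  have F_insert: "F (insert m T) = (\<Prod>k<l. 1 / real (sorted_list_of_set T ! k) ^ (I ! k)) / real m ^ i"
    if "m \<in> {1..N}" "T \<subseteq> {1..m - 1}" "card T = l" for m T
  proof -
    have fin: "finite T" and less: "\<forall>t\<in>T. t < m" using that finite_subset by fastforce+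
    have "F (insert m T) = (\<Prod>k<Suc l. 1 / real ((sorted_list_of_set T @ [m]) ! k) ^ ((I @ [i]) ! k))"
      unfolding F_def using sorted_list_of_set_insert_greater[OF fin less] by simp
    also have "\<dots> = (\<Prod>k<l. 1 / real (sorted_list_of_set T ! k) ^ (I ! k)) * (1 / real m ^ i)"
      using that by (simp add: prod.lessThan_Suc nth_append l_def)
    finally show ?thesis by simp
  qed
  have "MHS (I @ [i]) N = (\<Sum>S\<in>{S. S \<subseteq> {1..N} \<and> card S = Suc l}. F S)"
    unfolding MHS_def F_def l_def by simp
  also have "\<dots> = (\<Sum>m=1..N. \<Sum>T\<in>{T. T \<subseteq> {1..m - 1} \<and> card T = l}. F (insert m T))"
    unfolding subsets_card_Suc_eq
    by (subst sum.reindex[OF inj_on_insert_greater]) (auto simp: sum.Sigma split_def)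
  also have "\<dots> = (\<Sum>m=1..N. MHS I (m - 1) / real m ^ i)"
    unfolding MHS_def l_def by (intro sum.cong refl) (simp add: F_insert l_def sum_divide_distrib)
  finally show ?thesis .
qed

lemma Nsym_eq_0_if_less: "n < m \<Longrightarrow> Nsym n m N = 0"
  unfolding Nsym_def by (simp add: compositions_eq_empty)

lemma Nsym_0_right: "Nsym n 0 N = (if n = 0 then 1 else 0)"
  unfolding Nsym_def compositions_0_right by (simp add: MHS_Nil)

lemma Nsym_nonneg: "Nsym n m N \<ge> 0"
  unfolding Nsym_def by (intro sum_nonneg MHS_nonneg)

lemma Nsym_Suc_right:
  "Nsym n (Suc k) N = (\<Sum>m=1..N. \<Sum>i=1..n. Nsym (n - i) k (m - 1) / real m ^ i)"
proof -
  have inj: "inj_on (\<lambda>(i, I). I @ [i]) (SIGMA i:{1..n}. compositions (n - i) k)"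
    by (rule inj_onI) auto
  have "Nsym n (Suc k) N = (\<Sum>i=1..n. \<Sum>I\<in>compositions (n - i) k. MHS (I @ [i]) N)"
    unfolding Nsym_def compositions_Suc_right
    by (subst sum.reindex[OF inj]) (simp add: sum.Sigma finite_compositions split_def)
  also have "\<dots> = (\<Sum>i=1..n. \<Sum>m=1..N. \<Sum>I\<in>compositions (n - i) k. MHS I (m - 1) / real m ^ i)"
    unfolding MHS_snoc by (intro sum.cong refl sum.swap)
  also have "\<dots> = (\<Sum>m=1..N. \<Sum>i=1..n. Nsym (n - i) k (m - 1) / real m ^ i)"
    unfolding Nsym_def sum_divide_distrib by (rule sum.swap)
  finally show ?thesis .
qed

section \<open>Nonnegative series\<close>

lemma has_sum_shift: "((\<lambda>i. f (i + a)) has_sum S) UNIV \<longleftrightarrow> (f has_sum S) {a::nat..}"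
proof -
  have "bij_betw (\<lambda>i::nat. i + a) UNIV {a..}"
    by (rule bij_betwI[of _ _ _ "\<lambda>j. j - a"]) auto
  from has_sum_reindex_bij_betw[OF this, of f S] show ?thesis .
qed

lemma has_sum_telescope_nonneg:
  fixes f :: "nat \<Rightarrow> real"
  assumes "f \<longlonglongrightarrow> 0" and "\<And>n. f (Suc n) \<le> f n"
  shows "((\<lambda>n. f n - f (Suc n)) has_sum f 0) UNIV"
proof -
  have "(\<lambda>n. f n - f (Suc n)) sums f 0" using telescope_sums'[OF assms(1)] by simp
  thus ?thesis by (rule sums_nonneg_imp_has_sum) (simp add: assms(2))
qed

lemma has_sum_swap_nonneg:
  fixes f :: "'a \<Rightarrow> 'b \<Rightarrow> real"
  assumes nonneg: "\<And>a b. a \<in> A \<Longrightarrow> b \<in> B a \<Longrightarrow> 0 \<le> f a b"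
    and rows: "\<And>a. a \<in> A \<Longrightarrow> ((\<lambda>b. f a b) has_sum g a) (B a)"
    and total: "(g has_sum S) A"
    and domain: "\<And>a b. a \<in> A \<and> b \<in> B a \<longleftrightarrow> b \<in> C \<and> a \<in> D b"
  shows "((\<lambda>b. \<Sum>\<^sub>\<infinity>a\<in>D b. f a b) has_sum S) C"
proof -
  define F where "F = (\<lambda>(a, b). f a b)"
  have rows': "((\<lambda>b. F (a, b)) has_sum g a) (B a)" if "a \<in> A" for a
    using rows[OF that] by (simp add: F_def)
  have summable: "F summable_on Sigma A B"
    using total nonneg by (intro summable_on_SigmaI[where g=g, OF rows']) (auto simp: F_def summable_on_def)
  have "(F has_sum S) (Sigma A B)"
    by (rule has_sum_SigmaI[where g=g, OF rows' total summable])
  moreover have bij: "bij_betw (\<lambda>(b, a). (a, b)) (Sigma C D) (Sigma A B)"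
    by (rule bij_betwI[of _ _ _ "\<lambda>(a, b). (b, a)"]) (use domain in auto)
  ultimately have swapped: "((\<lambda>(b, a). f a b) has_sum S) (Sigma C D)"
    using has_sum_reindex_bij_betw[OF bij, of F S] by (simp add: F_def split_def)
  have "(\<lambda>(b, a). (\<lambda>b a. f a b) b a) summable_on Sigma C D"
    using swapped by (auto simp: summable_on_def)
  from summable_on_SigmaD1[OF this]
  have "(\<lambda>a. f a b) summable_on D b" if "b \<in> C" for b
    using that by auto
  thus ?thesis
    by (intro has_sum_SigmaD[OF swapped]) auto
qed

lemma has_sum_swap_nonneg':
  fixes f :: "'a \<Rightarrow> 'b \<Rightarrow> real"
  assumes "\<And>a b. a \<in> A \<Longrightarrow> b \<in> B a \<Longrightarrow> 0 \<le> f a b"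
    and "\<And>a. a \<in> A \<Longrightarrow> ((\<lambda>b. f a b) has_sum g a) (B a)"
    and "(g has_sum S) A"
    and "\<And>a b. a \<in> A \<and> b \<in> B a \<longleftrightarrow> b \<in> C \<and> a \<in> D b"
    and columns: "\<And>b. b \<in> C \<Longrightarrow> ((\<lambda>a. f a b) has_sum h b) (D b)"
  shows "(h has_sum S) C"
proof -
  have "((\<lambda>b. \<Sum>\<^sub>\<infinity>a\<in>D b. f a b) has_sum S) C"
    by (rule has_sum_swap_nonneg[OF assms(1-4)])
  thus ?thesis
    by (rule has_sum_cong[THEN iffD1, rotated]) (simp add: columns infsumI)
qed

lemma has_sum_weight_tail:
  "((\<lambda>N. 1 / ((real N + 1) * (real N + 2))) has_sum 1 / (real a + 1)) {a..}"
proof -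
  define f where "f i = 1 / (real (i + a) + 1)" for i
  have "f \<longlonglongrightarrow> 0" unfolding f_def by real_asymp
  moreover have "f (Suc i) \<le> f i" for i unfolding f_def by (simp add: frac_le)
  ultimately have "((\<lambda>i. f i - f (Suc i)) has_sum f 0) UNIV"
    by (rule has_sum_telescope_nonneg)
  moreover have "f i - f (Suc i) = 1 / ((real (i + a) + 1) * (real (i + a) + 2))" for i
    unfolding f_def by (simp add: field_simps)
  ultimately show ?thesis
    by (simp add: f_def flip: has_sum_shift)
qed

lemma zeta_nat_has_sum: "2 \<le> s \<Longrightarrow> ((\<lambda>p. 1 / real p ^ s) has_sum zeta_nat s) {1..}"
proof -
  assume "2 \<le> s"
  hence "summable (\<lambda>n. inverse (real (n + 1) ^ s))"
    by (subst summable_iff_shift) (rule inverse_power_summable)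
  hence "(\<lambda>k. 1 / real (k + 1) ^ s) sums zeta_nat s"
    unfolding zeta_nat_def by (simp add: field_simps summable_sums)
  hence "((\<lambda>k. 1 / real (k + 1) ^ s) has_sum zeta_nat s) UNIV"
    by (rule sums_nonneg_imp_has_sum) simp
  thus ?thesis by (simp flip: has_sum_shift)
qed

section \<open>Power series\<close>

lemma powser_sums_shift:
  fixes a :: "nat \<Rightarrow> real"
  assumes "(\<lambda>h. a h * y ^ h) sums S"
  shows "(\<lambda>h. (if h = 0 then 0 else a (h - 1)) * y ^ h) sums (y * S)"
proof -
  have "(\<lambda>h. y * (a h * y ^ h)) sums (y * S)" by (rule sums_mult[OF assms])
  hence "(\<lambda>h. (\<lambda>h. (if h = 0 then 0 else a (h - 1)) * y ^ h) (Suc h)) sums (y * S)"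
    by (simp add: mult_ac)
  thus ?thesis by (subst (asm) sums_Suc_iff) simp
qed

lemma powser_coeff_0_eq_0:
  fixes d :: "nat \<Rightarrow> real"
  assumes "0 < \<delta>" and "summable (\<lambda>h. d h * \<delta> ^ h)"
    and vanish: "\<And>y. 0 < y \<Longrightarrow> y < \<delta> \<Longrightarrow> (\<lambda>h. d h * y ^ h) sums 0"
  shows "d 0 = 0"
proof -
  define F where "F z = (\<Sum>h. d h * z ^ h)" for z :: real
  have "(F \<longlongrightarrow> d 0) (at 0)"
  proof (rule powser_limit_0[OF \<open>0 < \<delta>\<close>])
    fix z :: real assume "norm z < \<delta>"
    hence "summable (\<lambda>h. d h * z ^ h)" using powser_inside[OF assms(2), of z] assms(1) by simp
    thus "(\<lambda>h. d h * z ^ h) sums F z" unfolding F_def by (rule summable_sums)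
  qed
  hence "(F \<longlongrightarrow> d 0) (at_right 0)" by (rule tendsto_within_subset) simp
  moreover have "eventually (\<lambda>y. F y = 0) (at_right 0)"
    using eventually_at_right_real[OF \<open>0 < \<delta>\<close>]
    by (rule eventually_mono) (auto simp: F_def intro: sums_unique[symmetric] vanish)
  hence "(F \<longlongrightarrow> 0) (at_right 0)" by (rule tendsto_eventually)
  ultimately show ?thesis by (rule tendsto_unique[rotated]) simp
qed

lemma powser_coeffs_eq_0:
  fixes d :: "nat \<Rightarrow> real"
  assumes "0 < \<delta>" and "summable (\<lambda>h. d h * \<delta> ^ h)"
    and "\<And>y. 0 < y \<Longrightarrow> y < \<delta> \<Longrightarrow> (\<lambda>h. d h * y ^ h) sums 0"
  shows "d n = 0"
  using assms(2,3)
proof (induction n arbitrary: d)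
  case 0
  show ?case by (rule powser_coeff_0_eq_0[OF \<open>0 < \<delta>\<close> 0(1) 0(2)])
next
  case (Suc n)
  have d0: "d 0 = 0" by (rule powser_coeff_0_eq_0[OF \<open>0 < \<delta>\<close> Suc.prems])
  have "summable (\<lambda>h. d (Suc h) * \<delta> ^ Suc h / \<delta>)"
    using Suc.prems(1) by (intro summable_divide) (subst summable_Suc_iff)
  hence "summable (\<lambda>h. d (Suc h) * \<delta> ^ h)" using \<open>0 < \<delta>\<close> by simp
  moreover have "(\<lambda>h. d (Suc h) * y ^ h) sums 0" if "0 < y" "y < \<delta>" for y
  proof -
    have "(\<lambda>h. d (Suc h) * y ^ Suc h) sums 0"
      using Suc.prems(2)[OF that] d0 by (subst sums_Suc_iff) simp
    hence "(\<lambda>h. d (Suc h) * y ^ Suc h / y) sums (0 / y)" by (rule sums_divide)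
    thus ?thesis using \<open>0 < y\<close> by simp
  qed
  ultimately show ?case using Suc.IH[of "\<lambda>h. d (Suc h)"] by simp
qed

section \<open>The generating function of N_{k+h,k}\<close>

fun Nsym_gf :: "nat \<Rightarrow> real \<Rightarrow> nat \<Rightarrow> real" where
  "Nsym_gf 0 x N = 1"
| "Nsym_gf (Suc k) x N = (\<Sum>m=1..N. Nsym_gf k x (m - 1) / (real m - x))"

lemma Nsym_Suc_right_Cauchy_product:
  "Nsym (Suc k + h) (Suc k) N * x ^ h =
     (\<Sum>m=1..N. \<Sum>i\<le>h. x ^ i / real m ^ Suc i * (Nsym (k + (h - i)) k (m - 1) * x ^ (h - i)))"
proof -
  have "(\<Sum>i=1..Suc k + h. Nsym (Suc k + h - i) k (m - 1) / real m ^ i) * x ^ h =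
     (\<Sum>i\<le>h. x ^ i / real m ^ Suc i * (Nsym (k + (h - i)) k (m - 1) * x ^ (h - i)))" for m
  proof -
    have "(\<Sum>i=1..Suc k + h. Nsym (Suc k + h - i) k (m - 1) / real m ^ i) =
          (\<Sum>i=Suc 0..Suc (k + h). Nsym (Suc k + h - i) k (m - 1) / real m ^ i)" by simp
    also have "\<dots> = (\<Sum>i=0..k + h. Nsym (k + h - i) k (m - 1) / real m ^ Suc i)"
      by (subst sum.atLeast_Suc_atMost_Suc_shift) (simp add: o_def)
    also have "\<dots> = (\<Sum>i=0..h. Nsym (k + h - i) k (m - 1) / real m ^ Suc i)"
      by (rule sum.mono_neutral_right) (auto intro!: Nsym_eq_0_if_less)
    finally have "(\<Sum>i=1..Suc k + h. Nsym (Suc k + h - i) k (m - 1) / real m ^ i) * x ^ h =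
        (\<Sum>i=0..h. Nsym (k + h - i) k (m - 1) / real m ^ Suc i * x ^ h)"
      by (simp add: sum_distrib_right)
    also have "\<dots> = (\<Sum>i\<le>h. x ^ i / real m ^ Suc i * (Nsym (k + (h - i)) k (m - 1) * x ^ (h - i)))"
    proof (subst atLeast0AtMost, rule sum.cong[OF refl])
      fix i assume "i \<in> {..h}"
      hence "k + h - i = k + (h - i)" "x ^ h = x ^ i * x ^ (h - i)" by (auto simp flip: power_add)
      thus "Nsym (k + h - i) k (m - 1) / real m ^ Suc i * x ^ h =
          x ^ i / real m ^ Suc i * (Nsym (k + (h - i)) k (m - 1) * x ^ (h - i))" by simp
    qed
    finally show ?thesis .
  qed
  thus ?thesis unfolding Nsym_Suc_right sum_distrib_right by simp
qed

text \<open>The quotient of Pochhammer symbols (1 - x)_p / (n + 1 - x)_p; it telescopes both in n and in p.\<close>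

definition poch_quot :: "real \<Rightarrow> nat \<Rightarrow> nat \<Rightarrow> real" where
  "poch_quot x n p = (\<Prod>j=1..p. (real j - x) / (real (n + j) - x))"

definition zeta_gf :: "nat \<Rightarrow> real \<Rightarrow> real" where
  "zeta_gf s x = (\<Sum>\<^sub>\<infinity>p\<in>{1..}. 1 / (real p ^ s * (real p - x)))"

text \<open>eta_{0,1,1} with the term N = 0 included. It agrees with \<open>eta011\<close> on functions vanishing at 0
  and makes the recurrence below uniform in k.\<close>

definition eta011_full :: "(nat \<Rightarrow> real) \<Rightarrow> real" where
  "eta011_full f = (\<Sum>\<^sub>\<infinity>N. f N / ((real N + 1) * (real N + 2)))"

lemma partial_fractions_inverse_diff:
  fixes m x e :: real
  assumes "0 < m" "x < m" "0 \<le> x"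
  shows "e / ((m - x) * (m + 1)) = (e / (m * (m + 1)) + x * (e / (m * (m - x)))) / (1 + x)"
  using assms by (simp add: divide_simps) (simp add: algebra_simps)

context
  fixes x :: real
  assumes x_nonneg: "0 \<le> x" and x_less_1: "x < 1"
begin

lemma geometric_sums_inverse_diff:
  assumes "1 \<le> m"
  shows "(\<lambda>i. x ^ i / real m ^ Suc i) sums (1 / (real m - x))"
proof -
  have "norm (x / real m) < 1"
    using assms x_nonneg x_less_1 by (simp add: abs_of_nonneg divide_less_eq)
  hence "(\<lambda>i. 1 / real m * (x / real m) ^ i) sums (1 / real m * (1 / (1 - x / real m)))"
    by (intro sums_mult geometric_sums)
  moreover have "1 / real m * (1 / (1 - x / real m)) = 1 / (real m - x)"
    using assms x_less_1 by (simp add: field_simps)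
  moreover have "1 / real m * (x / real m) ^ i = x ^ i / real m ^ Suc i" for i
    by (simp add: power_divide)
  ultimately show ?thesis by simp
qed

lemma Nsym_gf_nonneg: "0 \<le> Nsym_gf k x N"
proof (induction k arbitrary: N)
  case (Suc k)
  thus ?case using x_less_1 by (auto intro!: sum_nonneg divide_nonneg_pos)
qed simp

lemma Nsym_gf_has_sum: "((\<lambda>h. Nsym (k + h) k N * x ^ h) has_sum Nsym_gf k x N) UNIV"
proof (induction k arbitrary: N)
  case 0
  show ?case
    by (rule has_sum_finite_neutralI[where B="{0}"]) (auto simp: Nsym_0_right)
next
  case (Suc k)
  define a where "a m i = x ^ i / real m ^ Suc i" for m i :: nat
  define b where "b m i = Nsym (k + i) k (m - 1) * x ^ i" for m i :: nat
  have Cauchy: "(\<lambda>h. \<Sum>i\<le>h. a m i * b m (h - i)) sums (Nsym_gf k x (m - 1) / (real m - x))"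
    if "m \<in> {1..N}" for m
  proof -
    have a: "a m sums (1 / (real m - x))"
      unfolding a_def using that by (intro geometric_sums_inverse_diff) auto
    have b: "b m sums Nsym_gf k x (m - 1)"
      unfolding b_def by (rule has_sum_imp_sums[OF Suc.IH])
    have "(\<lambda>i. norm (a m i)) = a m" "(\<lambda>i. norm (b m i)) = b m"
      using x_nonneg by (simp_all add: fun_eq_iff a_def b_def abs_of_nonneg Nsym_nonneg)
    hence "summable (\<lambda>i. norm (a m i))" "summable (\<lambda>i. norm (b m i))"
      using sums_summable[OF a] sums_summable[OF b] by simp_all
    hence "(\<lambda>h. \<Sum>i\<le>h. a m i * b m (h - i)) sums ((\<Sum>i. a m i) * (\<Sum>i. b m i))"
      by (rule Cauchy_product_sums)
    also have "(\<Sum>i. a m i) * (\<Sum>i. b m i) = Nsym_gf k x (m - 1) / (real m - x)"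
      by (simp add: sums_unique[OF a, symmetric] sums_unique[OF b, symmetric])
    finally show ?thesis .
  qed
  have "(\<lambda>h. \<Sum>m\<in>{1..N}. \<Sum>i\<le>h. a m i * b m (h - i)) sums
      (\<Sum>m\<in>{1..N}. Nsym_gf k x (m - 1) / (real m - x))"
    by (rule sums_sum[OF Cauchy])
  moreover have "(\<Sum>m\<in>{1..N}. \<Sum>i\<le>h. a m i * b m (h - i)) = Nsym (Suc k + h) (Suc k) N * x ^ h" for h
    unfolding Nsym_Suc_right_Cauchy_product a_def b_def by simp
  ultimately have "(\<lambda>h. Nsym (Suc k + h) (Suc k) N * x ^ h) sums Nsym_gf (Suc k) x N"
    by simp
  thus ?case
    by (rule sums_nonneg_imp_has_sum) (simp add: x_nonneg Nsym_nonneg)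
qed

lemma poch_quot_0_right: "poch_quot x n 0 = 1"
  unfolding poch_quot_def by simp

lemma poch_quot_0_left: "poch_quot x 0 p = 1"
  unfolding poch_quot_def using x_less_1 by (intro prod.neutral) auto

lemma poch_quot_Suc:
  "poch_quot x n (Suc p) = poch_quot x n p * ((real (Suc p) - x) / (real (n + Suc p) - x))"
  unfolding poch_quot_def by (simp add: prod.nat_ivl_Suc')

lemma poch_quot_nonneg: "0 \<le> poch_quot x n p"
  unfolding poch_quot_def using x_less_1 by (intro prod_nonneg) auto

lemma poch_quot_le_1: "poch_quot x n p \<le> 1"
proof (induction p)
  case (Suc p)
  have "0 \<le> (real (Suc p) - x) / (real (n + Suc p) - x)" "(real (Suc p) - x) / (real (n + Suc p) - x) \<le> 1"
    using x_less_1 by auto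
  thus ?case using Suc poch_quot_nonneg[of n p] by (simp only: poch_quot_Suc mult_le_one)
qed (simp add: poch_quot_0_right)

lemma poch_quot_diff_Suc_first:
  "poch_quot x n p - poch_quot x (Suc n) p = real p * poch_quot x (Suc n) p / (real (Suc n) - x)"
proof -
  have recurrence: "poch_quot x n p * (real n + 1 - x) = poch_quot x (Suc n) p * (real n + real p + 1 - x)"
  proof (induction p)
    case (Suc p)
    have pos: "real (n + Suc p) - x > 0" using x_less_1 by auto
    have "poch_quot x n (Suc p) * (real n + 1 - x) =
        poch_quot x (Suc n) p * (real n + real p + 1 - x) * ((real (Suc p) - x) / (real (n + Suc p) - x))"
      by (simp add: poch_quot_Suc flip: Suc)
    also have "\<dots> = poch_quot x (Suc n) (Suc p) * (real n + real (Suc p) + 1 - x)"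
      using pos by (simp add: poch_quot_Suc field_simps)
    finally show ?case .
  qed (simp add: poch_quot_0_right)
  thus ?thesis using x_less_1 by (simp add: field_simps)
qed

lemma poch_quot_diff_Suc_second:
  "poch_quot x n p - poch_quot x n (Suc p) = real n * poch_quot x n (Suc p) / (real (Suc p) - x)"
proof -
  have pos: "real (Suc p) - x > 0" "real (n + Suc p) - x > 0" using x_less_1 by auto
  hence "poch_quot x n (Suc p) * (real (n + Suc p) - x) = poch_quot x n p * (real (Suc p) - x)"
    by (simp add: poch_quot_Suc field_simps)
  hence "poch_quot x n p = poch_quot x n (Suc p) * (real (n + Suc p) - x) / (real (Suc p) - x)"
    using pos by (simp add: field_simps)
  thus ?thesis using pos by (simp add: field_simps)
qed

lemma poch_quot_tendsto_first: "1 \<le> p \<Longrightarrow> (\<lambda>i. poch_quot x (m + i) p) \<longlonglongrightarrow> 0"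
proof -
  assume "1 \<le> p"
  then obtain q where p: "p = Suc q" by (cases p) auto
  have bound: "\<forall>i. norm (poch_quot x (m + i) p) \<le> (real p - x) / (real (m + i + p) - x)"
  proof
    fix i
    have "norm (poch_quot x (m + i) p) = poch_quot x (m + i) q * ((real p - x) / (real (m + i + p) - x))"
      unfolding real_norm_def abs_of_nonneg[OF poch_quot_nonneg] by (simp add: p poch_quot_Suc)
    also have "\<dots> \<le> 1 * ((real p - x) / (real (m + i + p) - x))"
      using x_less_1 p by (intro mult_right_mono poch_quot_le_1) auto
    finally show "norm (poch_quot x (m + i) p) \<le> (real p - x) / (real (m + i + p) - x)" by simp
  qed
  moreover have "(\<lambda>i. (real p - x) / (real (m + i + p) - x)) \<longlonglongrightarrow> 0" by real_asymp
  ultimately show ?thesis by (rule Lim_null_comparison[OF always_eventually])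
qed

lemma poch_quot_tendsto_second: "1 \<le> n \<Longrightarrow> (\<lambda>p. poch_quot x n p) \<longlonglongrightarrow> 0"
proof -
  assume "1 \<le> n"
  have bound: "poch_quot x n p * (real p + 1 - x) \<le> 1 - x" for p
  proof (induction p)
    case (Suc p)
    have pos: "real (n + Suc p) - x > 0" using x_less_1 by auto
    have "poch_quot x n (Suc p) * (real (Suc p) + 1 - x) =
        poch_quot x n p * (real p + 1 - x) * ((real p + 2 - x) / (real (n + Suc p) - x))"
      using pos by (simp add: poch_quot_Suc field_simps)
    also have "\<dots> \<le> poch_quot x n p * (real p + 1 - x)"
      using \<open>1 \<le> n\<close> pos poch_quot_nonneg[of n p] x_less_1
      by (intro mult_left_le) (auto intro!: mult_nonneg_nonneg)
    finally show ?case using Suc by simp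
  qed (simp add: poch_quot_0_right)
  have "\<forall>p. norm (poch_quot x n p) \<le> (1 - x) / (real p + 1 - x)"
  proof
    fix p
    show "norm (poch_quot x n p) \<le> (1 - x) / (real p + 1 - x)"
      using bound[of p] poch_quot_nonneg[of n p] x_less_1 by (simp add: field_simps)
  qed
  moreover have "(\<lambda>p. (1 - x) / (real p + 1 - x)) \<longlonglongrightarrow> 0" by real_asymp
  ultimately show ?thesis by (rule Lim_null_comparison[OF always_eventually])
qed

lemma has_sum_poch_quot_first:
  assumes "1 \<le> p"
  shows "((\<lambda>n. poch_quot x n p / (real n - x)) has_sum poch_quot x m p / real p) {Suc m..}"
proof -
  have "poch_quot x (Suc n) p \<le> poch_quot x n p" for n
    using poch_quot_diff_Suc_first[of n p] x_less_1
    by (smt (verit) divide_nonneg_pos mult_nonneg_nonneg of_nat_0_le_iff of_nat_Suc poch_quot_nonneg)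
  hence "((\<lambda>i. poch_quot x (m + i) p - poch_quot x (m + Suc i) p) has_sum poch_quot x (m + 0) p) UNIV"
    using poch_quot_tendsto_first[OF assms] by (intro has_sum_telescope_nonneg) auto
  from has_sum_cmult_left[OF this, of "1 / real p"]
  have "((\<lambda>i. (poch_quot x (m + i) p - poch_quot x (m + Suc i) p) / real p) has_sum
      poch_quot x m p / real p) UNIV"
    by simp
  thus ?thesis
    using assms by (simp add: poch_quot_diff_Suc_first add.commute flip: has_sum_shift)
qed

lemma has_sum_poch_quot_second:
  assumes "1 \<le> n"
  shows "((\<lambda>p. poch_quot x n p / (real p - x)) has_sum 1 / real n) {1..}"
proof -
  have "poch_quot x n (Suc p) \<le> poch_quot x n p" for p
    using poch_quot_diff_Suc_second[of n p] x_less_1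
    by (smt (verit) divide_nonneg_pos mult_nonneg_nonneg of_nat_0_le_iff of_nat_Suc poch_quot_nonneg)
  hence "((\<lambda>i. poch_quot x n i - poch_quot x n (Suc i)) has_sum poch_quot x n 0) UNIV"
    using poch_quot_tendsto_second[OF assms] by (intro has_sum_telescope_nonneg) auto
  from has_sum_cmult_left[OF this, of "1 / real n"]
  have "((\<lambda>i. (poch_quot x n i - poch_quot x n (Suc i)) / real n) has_sum 1 / real n) UNIV"
    by (simp add: poch_quot_0_right)
  thus ?thesis
    using assms by (simp add: poch_quot_diff_Suc_second flip: has_sum_shift)
qed

section \<open>The weighted generating functions\<close>

lemma zeta_gf_has_sum:
  assumes "1 \<le> s"
  shows "((\<lambda>p. 1 / (real p ^ s * (real p - x))) has_sum zeta_gf s x) {1..}"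
proof -
  have "((\<lambda>p. 1 / (1 - x) * (1 / real p ^ 2)) has_sum 1 / (1 - x) * zeta_nat 2) {1..}"
    by (intro has_sum_cmult_right zeta_nat_has_sum) simp
  moreover have "1 / (real p ^ s * (real p - x)) \<le> 1 / (1 - x) * (1 / real p ^ 2)" if "p \<in> {1..}" for p
  proof -
    have "real p \<le> real p ^ s"
      using power_increasing[of 1 s "real p"] that assms by simp
    moreover have "(1 - x) * real p \<le> real p - x"
      using that x_nonneg mult_left_mono[of 1 "real p" x] by (simp add: algebra_simps)
    ultimately have "real p * ((1 - x) * real p) \<le> real p ^ s * (real p - x)"
      using that x_less_1 by (intro mult_mono) auto
    hence "1 / (real p ^ s * (real p - x)) \<le> 1 / (real p * ((1 - x) * real p))"
      using that x_less_1 by (intro divide_left_mono) auto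
    thus ?thesis by (simp add: power2_eq_square mult_ac)
  qed
  ultimately have "(\<lambda>p. 1 / (real p ^ s * (real p - x))) summable_on {1..}"
    using x_less_1 by (intro summable_on_comparison_test[OF has_sum_imp_summable]) auto
  thus ?thesis unfolding zeta_gf_def by (rule has_sum_infsum)
qed

lemma zeta_gf_powser:
  assumes "1 \<le> s"
  shows "(\<lambda>h. zeta_nat (s + 1 + h) * x ^ h) sums zeta_gf s x"
proof -
  define f where "f p h = x ^ h / real p ^ (s + 1 + h)" for p h :: nat
  have "((\<lambda>h. zeta_nat (s + 1 + h) * x ^ h) has_sum zeta_gf s x) UNIV"
  proof (rule has_sum_swap_nonneg'[where f = f and A = "{1..}" and B = "\<lambda>_. UNIV"
        and C = UNIV and D = "\<lambda>_. {1..}"])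
    fix p h :: nat
    show "0 \<le> f p h" using x_nonneg by (simp add: f_def)
    show "p \<in> {1..} \<and> h \<in> UNIV \<longleftrightarrow> h \<in> UNIV \<and> p \<in> {1..}" by auto
  next
    fix p :: nat assume "p \<in> {1..}"
    hence "(\<lambda>h. 1 / real p ^ s * (x ^ h / real p ^ Suc h)) sums (1 / real p ^ s * (1 / (real p - x)))"
      by (intro sums_mult geometric_sums_inverse_diff) auto
    moreover have "1 / real p ^ s * (x ^ h / real p ^ Suc h) = f p h" for h
      by (simp add: f_def power_add)
    ultimately have "(\<lambda>h. f p h) sums (1 / (real p ^ s * (real p - x)))" by simp
    thus "((\<lambda>h. f p h) has_sum 1 / (real p ^ s * (real p - x))) UNIV"
      by (rule sums_nonneg_imp_has_sum) (simp add: f_def x_nonneg)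
  next
    show "((\<lambda>p. 1 / (real p ^ s * (real p - x))) has_sum zeta_gf s x) {1..}"
      by (rule zeta_gf_has_sum[OF assms])
  next
    fix h :: nat
    show "((\<lambda>p. f p h) has_sum zeta_nat (s + 1 + h) * x ^ h) {1..}"
      using has_sum_cmult_left[OF zeta_nat_has_sum[of "s + 1 + h"], of "x ^ h"] assms
      by (simp add: f_def)
  qed
  thus ?thesis by (rule has_sum_imp_sums)
qed

lemma has_sum_Nsym_gf_poch_quot:
  assumes "1 \<le> p"
  shows "((\<lambda>N. Nsym_gf j x N * poch_quot x (Suc N) p / (real (Suc N) - x)) has_sum 1 / real p ^ Suc j) UNIV"
proof (induction j)
  case 0
  from has_sum_poch_quot_first[OF assms, of 0] show ?case
    by (simp add: poch_quot_0_left flip: has_sum_shift)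
next
  case (Suc j)
  define f where "f m N = Nsym_gf j x (m - 1) / (real m - x) * (poch_quot x (Suc N) p / (real (Suc N) - x))"
    for m N
  show ?case
  proof (rule has_sum_swap_nonneg'[where f = f and A = "{1..}" and B = "\<lambda>m. {m..}" and C = UNIV
        and D = "\<lambda>N. {1..N}" and g = "\<lambda>m. Nsym_gf j x (m - 1) / (real m - x) * (poch_quot x m p / real p)"])
    fix m N :: nat
    show "m \<in> {1..} \<and> N \<in> {m..} \<longleftrightarrow> N \<in> UNIV \<and> m \<in> {1..N}" by auto
    assume "m \<in> {1..}" "N \<in> {m..}"
    thus "0 \<le> f m N" unfolding f_def using x_less_1
      by (intro mult_nonneg_nonneg divide_nonneg_pos Nsym_gf_nonneg poch_quot_nonneg) auto
  next
    fix m :: nat assume "m \<in> {1..}"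
    from has_sum_poch_quot_first[OF assms, of m]
    have "((\<lambda>N. poch_quot x (Suc N) p / (real (Suc N) - x)) has_sum poch_quot x m p / real p) {m..}"
      by (simp flip: has_sum_shift)
    thus "((\<lambda>N. f m N) has_sum Nsym_gf j x (m - 1) / (real m - x) * (poch_quot x m p / real p)) {m..}"
      unfolding f_def by (rule has_sum_cmult_right)
  next
    from has_sum_cmult_left[OF Suc.IH, of "1 / real p"]
    show "((\<lambda>m. Nsym_gf j x (m - 1) / (real m - x) * (poch_quot x m p / real p)) has_sum
        1 / real p ^ Suc (Suc j)) {1..}"
      by (simp add: field_simps flip: has_sum_shift)
  next
    fix N :: nat
    show "((\<lambda>m. f m N) has_sum Nsym_gf (Suc j) x N * poch_quot x (Suc N) p / (real (Suc N) - x)) {1..N}"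
      by (subst has_sum_finite_iff) (simp_all add: f_def sum_distrib_right sum_divide_distrib)
  qed
qed

lemma has_sum_Nsym_gf_duality:
  "((\<lambda>N. Nsym_gf j x N / ((real N + 1) * (real N + 1 - x))) has_sum zeta_gf (Suc j) x) UNIV"
proof -
  define f where "f p N = 1 / (real p - x) * (Nsym_gf j x N * poch_quot x (Suc N) p / (real (Suc N) - x))"
    for p N
  show ?thesis
  proof (rule has_sum_swap_nonneg'[where f = f and A = "{1..}" and B = "\<lambda>_. UNIV" and C = UNIV
        and D = "\<lambda>_. {1..}" and g = "\<lambda>p. 1 / (real p - x) * (1 / real p ^ Suc j)"])
    fix p N :: nat
    show "p \<in> {1..} \<and> N \<in> UNIV \<longleftrightarrow> N \<in> UNIV \<and> p \<in> {1..}" by auto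
    assume "p \<in> {1..}"
    thus "0 \<le> f p N" unfolding f_def using x_less_1
      by (intro mult_nonneg_nonneg divide_nonneg_pos Nsym_gf_nonneg poch_quot_nonneg) auto
  next
    fix p :: nat assume "p \<in> {1..}"
    thus "((\<lambda>N. f p N) has_sum 1 / (real p - x) * (1 / real p ^ Suc j)) UNIV"
      unfolding f_def by (intro has_sum_cmult_right has_sum_Nsym_gf_poch_quot) auto
  next
    show "((\<lambda>p. 1 / (real p - x) * (1 / real p ^ Suc j)) has_sum zeta_gf (Suc j) x) {1..}"
      using zeta_gf_has_sum[of "Suc j"] by (simp add: mult_ac)
  next
    fix N :: nat
    from has_sum_cmult_right[OF has_sum_poch_quot_second[of "Suc N"],
        of "Nsym_gf j x N / (real (Suc N) - x)"]
    show "((\<lambda>p. f p N) has_sum Nsym_gf j x N / ((real N + 1) * (real N + 1 - x))) {1..}"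
      by (simp add: f_def field_simps)
  qed
qed

lemma has_sum_Nsym_gf_Suc_weighted:
  assumes "((\<lambda>N. Nsym_gf k x N / ((real N + 1) * (real N + 2))) has_sum B) UNIV"
  shows "((\<lambda>N. Nsym_gf (Suc k) x N / ((real N + 1) * (real N + 2))) has_sum
    (B + x * zeta_gf (Suc k) x) / (1 + x)) UNIV"
proof -
  define f where "f m N = Nsym_gf k x (m - 1) / (real m - x) * (1 / ((real N + 1) * (real N + 2)))" for m N
  define g where "g m = Nsym_gf k x (m - 1) / (real m - x) * (1 / (real m + 1))" for m
  show ?thesis
  proof (rule has_sum_swap_nonneg'[where f = f and g = g and A = "{1..}" and B = "\<lambda>m. {m..}"
        and C = UNIV and D = "\<lambda>N. {1..N}"])
    fix m N :: nat
    show "m \<in> {1..} \<and> N \<in> {m..} \<longleftrightarrow> N \<in> UNIV \<and> m \<in> {1..N}" by auto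
    assume "m \<in> {1..}"
    thus "0 \<le> f m N" unfolding f_def using x_less_1
      by (intro mult_nonneg_nonneg divide_nonneg_pos Nsym_gf_nonneg) auto
  next
    fix m :: nat
    show "((\<lambda>N. f m N) has_sum g m) {m..}"
      unfolding f_def g_def by (intro has_sum_cmult_right has_sum_weight_tail)
  next
    have "g (i + 1) = (Nsym_gf k x i / ((real i + 1) * (real i + 2))
        + x * (Nsym_gf k x i / ((real i + 1) * (real i + 1 - x)))) / (1 + x)" for i
      using partial_fractions_inverse_diff[of "real i + 1" x "Nsym_gf k x i"] x_nonneg x_less_1
      unfolding g_def by (simp add: add_ac)
    moreover have "((\<lambda>i. (Nsym_gf k x i / ((real i + 1) * (real i + 2))
        + x * (Nsym_gf k x i / ((real i + 1) * (real i + 1 - x)))) / (1 + x)) has_sum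
        (B + x * zeta_gf (Suc k) x) / (1 + x)) UNIV"
    proof -
      have "((\<lambda>i. Nsym_gf k x i / ((real i + 1) * (real i + 2))
          + x * (Nsym_gf k x i / ((real i + 1) * (real i + 1 - x)))) has_sum
          B + x * zeta_gf (Suc k) x) UNIV"
        by (intro has_sum_add assms has_sum_cmult_right has_sum_Nsym_gf_duality)
      from has_sum_cmult_left[OF this, of "1 / (1 + x)"] show ?thesis by simp
    qed
    ultimately show "(g has_sum (B + x * zeta_gf (Suc k) x) / (1 + x)) {1..}"
      by (simp flip: has_sum_shift)
  next
    fix N :: nat
    show "((\<lambda>m. f m N) has_sum Nsym_gf (Suc k) x N / ((real N + 1) * (real N + 2))) {1..N}"
      by (subst has_sum_finite_iff) (simp_all add: f_def sum_divide_distrib)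
  qed
qed

lemma has_sum_Nsym_gf_weighted:
  "((\<lambda>N. Nsym_gf k x N / ((real N + 1) * (real N + 2))) has_sum eta011_full (Nsym_gf k x)) UNIV"
proof (induction k)
  case 0
  have "Nsym_gf 0 x = (\<lambda>_. 1)" by (rule ext) simp
  thus ?case
    using has_sum_weight_tail[of 0] by (simp add: eta011_full_def infsumI)
next
  case (Suc k)
  from has_sum_Nsym_gf_Suc_weighted[OF Suc.IH]
  have "(\<lambda>N. Nsym_gf (Suc k) x N / ((real N + 1) * (real N + 2))) summable_on UNIV"
    by (rule has_sum_imp_summable)
  thus ?case unfolding eta011_full_def by (rule has_sum_infsum)
qed

lemma eta011_full_Nsym_gf_Suc:
  "(1 + x) * eta011_full (Nsym_gf (Suc k) x) = eta011_full (Nsym_gf k x) + x * zeta_gf (Suc k) x"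
proof -
  have "eta011_full (Nsym_gf (Suc k) x) = (eta011_full (Nsym_gf k x) + x * zeta_gf (Suc k) x) / (1 + x)"
    using has_sum_Nsym_gf_weighted[of "Suc k"] has_sum_Nsym_gf_Suc_weighted[OF has_sum_Nsym_gf_weighted]
    by (rule has_sum_unique)
  thus ?thesis using x_nonneg by (simp add: field_simps)
qed

lemma eta011_full_Nsym_powser:
  "(\<lambda>h. eta011_full (Nsym (k + h) k) * x ^ h) sums eta011_full (Nsym_gf k x)"
proof -
  define f where "f N h = Nsym (k + h) k N / ((real N + 1) * (real N + 2)) * x ^ h" for N h
  have "((\<lambda>h. \<Sum>\<^sub>\<infinity>N. f N h) has_sum eta011_full (Nsym_gf k x)) UNIV"
  proof (rule has_sum_swap_nonneg[where A = UNIV and B = "\<lambda>_. UNIV" and C = UNIV and D = "\<lambda>_. UNIV"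
        and g = "\<lambda>N. Nsym_gf k x N / ((real N + 1) * (real N + 2))"])
    fix N h :: nat
    show "0 \<le> f N h" using x_nonneg by (simp add: f_def Nsym_nonneg)
    show "N \<in> UNIV \<and> h \<in> UNIV \<longleftrightarrow> h \<in> UNIV \<and> N \<in> UNIV" by simp
    from has_sum_cmult_right[OF Nsym_gf_has_sum, of "1 / ((real N + 1) * (real N + 2))"]
    show "((\<lambda>h. f N h) has_sum Nsym_gf k x N / ((real N + 1) * (real N + 2))) UNIV"
      by (simp add: f_def)
  next
    show "((\<lambda>N. Nsym_gf k x N / ((real N + 1) * (real N + 2))) has_sum eta011_full (Nsym_gf k x)) UNIV"
      by (rule has_sum_Nsym_gf_weighted)
  qed
  moreover have "(\<Sum>\<^sub>\<infinity>N. f N h) = eta011_full (Nsym (k + h) k) * x ^ h" for h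
    unfolding f_def eta011_full_def by (rule infsum_cmult_left')
  ultimately show ?thesis by (simp add: has_sum_imp_sums)
qed

end

section \<open>The recurrence\<close>

lemma eta011_full_1: "eta011_full (\<lambda>_. 1) = 1"
  unfolding eta011_full_def by (rule infsumI) (use has_sum_weight_tail[of 0] in simp)

lemma eta011_full_Nsym_0_right: "eta011_full (Nsym h 0) = (if h = 0 then 1 else 0)"
  using eta011_full_1 by (simp add: eta011_full_def Nsym_0_right)

lemma eta011_eq_eta011_full:
  assumes "f 0 = 0" and "(\<lambda>N. f N / ((real N + 1) * (real N + 2))) summable_on UNIV"
  shows "eta011 f = eta011_full f"
proof -
  define g where "g N = f N / ((real N + 1) * (real N + 2))" for N
  have "(g has_sum eta011_full f) UNIV"
    using assms(2) unfolding g_def eta011_full_def by (rule has_sum_infsum)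
  also have "?this \<longleftrightarrow> (g has_sum eta011_full f) {1..}"
    by (rule has_sum_cong_neutral) (auto simp: g_def assms(1) not_le)
  finally have "(\<lambda>k. g (k + 1)) sums eta011_full f"
    by (simp add: has_sum_imp_sums flip: has_sum_shift)
  moreover have "g (k + 1) = f (k + 1) / (real (k + 2) * real (k + 3))" for k
    by (simp add: g_def)
  ultimately have "(\<lambda>k. f (k + 1) / (real (k + 2) * real (k + 3))) sums eta011_full f" by simp
  thus ?thesis unfolding eta011_def by (rule sums_unique[symmetric])
qed

lemma Nsym_weighted_summable: "(\<lambda>N. Nsym n k N / ((real N + 1) * (real N + 2))) summable_on UNIV"
proof (cases "k \<le> n")
  case False
  thus ?thesis by (simp add: Nsym_eq_0_if_less)
next
  case True
  then obtain h where n: "n = k + h" using le_Suc_ex by blast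
  have "Nsym n k N \<le> 2 ^ h * Nsym_gf k (1/2) N" for N
  proof -
    have "((\<lambda>h. Nsym (k + h) k N * (1/2) ^ h) has_sum Nsym_gf k (1/2) N) UNIV"
      by (rule Nsym_gf_has_sum) simp_all
    hence "(\<lambda>h. Nsym (k + h) k N * (1/2) ^ h) sums Nsym_gf k (1/2) N"
      by (rule has_sum_imp_sums)
    from sum_le_suminf[OF sums_summable[OF this], of "{h}"] sums_unique[OF this]
    have "Nsym n k N * (1/2) ^ h \<le> Nsym_gf k (1/2) N"
      by (simp add: n Nsym_nonneg)
    thus ?thesis by (simp add: power_one_over field_simps)
  qed
  hence le: "Nsym n k N / ((real N + 1) * (real N + 2)) \<le>
      2 ^ h * (Nsym_gf k (1/2) N / ((real N + 1) * (real N + 2)))" for N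
    using divide_right_mono[of "Nsym n k N" "2 ^ h * Nsym_gf k (1/2) N" "(real N + 1) * (real N + 2)"]
    by simp
  have "((\<lambda>N. Nsym_gf k (1/2) N / ((real N + 1) * (real N + 2))) has_sum
      eta011_full (Nsym_gf k (1/2))) UNIV"
    by (rule has_sum_Nsym_gf_weighted) simp_all
  hence "(\<lambda>N. 2 ^ h * (Nsym_gf k (1/2) N / ((real N + 1) * (real N + 2)))) summable_on UNIV"
    by (intro summable_on_cmult_right has_sum_imp_summable)
  thus ?thesis
    by (rule summable_on_comparison_test) (use le in \<open>simp_all add: Nsym_nonneg\<close>)
qed

lemma eta011_Nsym:
  assumes "1 \<le> k"
  shows "eta011 (Nsym n k) = eta011_full (Nsym n k)"
proof (rule eta011_eq_eta011_full[OF _ Nsym_weighted_summable])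
  obtain k' where "k = Suc k'" using assms by (cases k) auto
  thus "Nsym n k 0 = 0" by (simp add: Nsym_Suc_right)
qed

lemma eta011_full_Nsym_recurrence:
  "eta011_full (Nsym (Suc j + h) (Suc j)) + (if h = 0 then 0 else eta011_full (Nsym (j + h) (Suc j))) =
    eta011_full (Nsym (j + h) j) + (if h = 0 then 0 else zeta_nat (j + 1 + h))"
proof -
  define c where "c k h = eta011_full (Nsym (k + h) k)" for k h
  define d where "d h = c (Suc j) h + (if h = 0 then 0 else c (Suc j) (h - 1))
      - c j h - (if h = 0 then 0 else zeta_nat (j + 1 + h))" for h
  have vanish: "(\<lambda>h. d h * y ^ h) sums 0" if "0 < y" "y < 1" for y
  proof -
    have gf: "(\<lambda>h. c k h * y ^ h) sums eta011_full (Nsym_gf k y)" for k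
      unfolding c_def using that by (intro eta011_full_Nsym_powser) auto
    have shift_eq: "(if h = 0 then 0 else zeta_nat (Suc j + 1 + (h - 1))) * y ^ h
        = (if h = 0 then 0 else zeta_nat (j + 1 + h)) * y ^ h" for h
      by (cases h) simp_all
    have "(\<lambda>h. zeta_nat (Suc j + 1 + h) * y ^ h) sums zeta_gf (Suc j) y"
      using that by (intro zeta_gf_powser) auto
    from powser_sums_shift[OF this]
    have zeta: "(\<lambda>h. (if h = 0 then 0 else zeta_nat (j + 1 + h)) * y ^ h) sums (y * zeta_gf (Suc j) y)"
      by (rule sums_cong[THEN iffD1, rotated]) (rule shift_eq)
    have "(\<lambda>h. c (Suc j) h * y ^ h + (if h = 0 then 0 else c (Suc j) (h - 1)) * y ^ h
        - c j h * y ^ h - (if h = 0 then 0 else zeta_nat (j + 1 + h)) * y ^ h) sums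
        (eta011_full (Nsym_gf (Suc j) y) + y * eta011_full (Nsym_gf (Suc j) y)
          - eta011_full (Nsym_gf j y) - y * zeta_gf (Suc j) y)"
      by (intro sums_diff sums_add gf powser_sums_shift zeta)
    also have "eta011_full (Nsym_gf (Suc j) y) + y * eta011_full (Nsym_gf (Suc j) y)
        - eta011_full (Nsym_gf j y) - y * zeta_gf (Suc j) y = 0"
      using eta011_full_Nsym_gf_Suc[of y j] that by (simp add: algebra_simps)
    finally show ?thesis by (simp add: d_def algebra_simps)
  qed
  have "summable (\<lambda>h. d h * (1/2) ^ h)"
    by (rule sums_summable[OF vanish]) simp_all
  hence "d h = 0"
    by (rule powser_coeffs_eq_0[rotated]) (use vanish in auto)
  thus ?thesis by (cases h) (simp_all add: d_def c_def)
qed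

lemma eta011_full_Nsym_diag: "eta011_full (Nsym k k) = 1"
proof (induction k)
  case 0
  show ?case by (simp add: eta011_full_Nsym_0_right)
next
  case (Suc k)
  thus ?case using eta011_full_Nsym_recurrence[of k 0] by simp
qed

theorem mainTheorem10:
  shows "(\<forall>n::nat. n \<ge> 1 \<longrightarrow> eta011 (Nsym n n) = 1)
    \<and> (\<forall>n::nat. n \<ge> 2 \<longrightarrow>
          eta011 (Nsym n 1) = zeta_nat n - eta011 (Nsym (n - 1) 1))
    \<and> (\<forall>n k::nat. n \<ge> 2 \<longrightarrow> 1 < k \<longrightarrow> k < n \<longrightarrow>
          eta011 (Nsym n k) = zeta_nat n + eta011 (Nsym (n - 1) (k - 1)) - eta011 (Nsym (n - 1) k))"
proof (intro conjI allI impI)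
  fix n :: nat assume "n \<ge> 1"
  thus "eta011 (Nsym n n) = 1" by (simp add: eta011_Nsym eta011_full_Nsym_diag)
next
  fix n :: nat assume "n \<ge> 2"
  then obtain h where n: "n = Suc (Suc h)" by (metis add_2_eq_Suc le_Suc_ex)
  from eta011_full_Nsym_recurrence[of 0 "Suc h"]
  show "eta011 (Nsym n 1) = zeta_nat n - eta011 (Nsym (n - 1) 1)"
    by (simp add: n eta011_Nsym eta011_full_Nsym_0_right)
next
  fix n k :: nat assume "n \<ge> 2" "1 < k" "k < n"
  define j h where "j = k - 1" and "h = n - k - 1"
  have jh: "k = Suc j" "n = Suc j + Suc h" "1 \<le> j"
    using \<open>1 < k\<close> \<open>k < n\<close> by (auto simp: j_def h_def)
  from eta011_full_Nsym_recurrence[of j "Suc h"]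
  show "eta011 (Nsym n k) = zeta_nat n + eta011 (Nsym (n - 1) (k - 1)) - eta011 (Nsym (n - 1) k)"
    using jh by (simp add: eta011_Nsym)
qed

end
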